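(* The set $R_{0,2}$ of all Riordan matrices whose $A$-sequence has the form $(1,a_1,0,a_3,a_4,\ldots)$ (i.e. $a_0=1$ and $a_2=0$) is a subgroup of the Riordan group.
   Context: Let $K$ be $\mathbb{R}$ or $\mathbb{C}$. A (proper) Riordan matrix is a pair $(g,f)$ of formal power series in $K[[t]]$ with $g(0)=1$, $f(0)=0$, $f'(0)\neq 0$, identified with the lower triangular matrix with entries $[t^n]g(t)f(t)^k$. The Riordan group is the set of these matrices under matrix multiplication, $(g_1,f_1)(g_2,f_2)=(g_1\,g_2(f_1),\,f_2(f_1))$, with identity $(1,t)$. The $A$-sequence $(a_j)_{j\ge0}$ of $(g,f)$ is the unique sequence whose generating function $A(t)$ satisfies $f(t)=tA(f(t))$. *)

theory Defs
  imports "HOL-Computational_Algebra.Formal_Power_Series" "HOL-Algebra.Group"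
begin

text \<open>A proper Riordan matrix is identified with the pair (g,f) of formal power series
  with g(0)=1, f(0)=0, f'(0) nonzero.\<close>

definition riordan_set :: "('a::field fps \<times> 'a fps) set" where
  "riordan_set = {(g, f). fps_nth g 0 = 1 \<and> fps_nth f 0 = 0 \<and> fps_nth f 1 \<noteq> 0}"

definition riordan_mult :: "'a::field fps \<times> 'a fps \<Rightarrow> 'a fps \<times> 'a fps \<Rightarrow> 'a fps \<times> 'a fps" where
  "riordan_mult p q = (fst p * (fst q oo snd p), snd q oo snd p)"

definition riordan_group :: "('a::field fps \<times> 'a fps) monoid" where
  "riordan_group = \<lparr> carrier = riordan_set, mult = riordan_mult, one = (1, fps_X) \<rparr>"

definition A_seq :: "'a::field fps \<Rightarrow> 'a fps" where
  "A_seq f = (THE A. f = fps_X * (A oo f))"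

definition R02 :: "('a::field fps \<times> 'a fps) set" where
  "R02 = {(g, f) \<in> riordan_set. fps_nth (A_seq f) 0 = 1 \<and> fps_nth (A_seq f) 2 = 0}"

end

theory Submission
  imports Defs
begin

unbundle fps_syntax

text \<open>
  Comparing coefficients in \<open>f = t A(f)\<close> gives \<open>f\<^sub>1 = a\<^sub>0\<close>, \<open>f\<^sub>2 = a\<^sub>1 f\<^sub>1\<close> and
  \<open>f\<^sub>3 = a\<^sub>1 f\<^sub>2 + a\<^sub>2 f\<^sub>1\<^sup>2\<close>, so \<open>(g, f) \<in> R\<^sub>0\<^sub>,\<^sub>2\<close> iff \<open>f\<^sub>1 = 1\<close> and \<open>f\<^sub>3 = f\<^sub>2\<^sup>2\<close>:
  a condition on the 3-jet of \<open>f\<close> alone. The Riordan product and inverse act on the second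
  component by composition and compositional inversion, and the condition is preserved by
  both: \<open>(g \<circ> f)\<^sub>2 = f\<^sub>2 + g\<^sub>2\<close> and \<open>(g \<circ> f)\<^sub>3 = (f\<^sub>2 + g\<^sub>2)\<^sup>2\<close>.
\<close>

lemma fps_compose_nth_1:
  fixes a b :: "'a::comm_semiring_1 fps"
  assumes "b $ 0 = 0"
  shows "(a oo b) $ 1 = a $ 1 * b $ 1"
  using assms by (simp add: fps_compose_nth)

lemma fps_compose_nth_2:
  fixes a b :: "'a::comm_semiring_1 fps"
  assumes "b $ 0 = 0"
  shows "(a oo b) $ 2 = a $ 1 * b $ 2 + a $ 2 * (b $ 1)\<^sup>2"
  using assms
  by (simp add: fps_compose_nth power2_eq_square fps_mult_nth numeral_2_eq_2)

lemma fps_compose_nth_3: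
  fixes a b :: "'a::comm_semiring_1 fps"
  assumes b0: "b $ 0 = 0"
  shows "(a oo b) $ 3 = a $ 1 * b $ 3 + 2 * a $ 2 * b $ 1 * b $ 2 + a $ 3 * (b $ 1) ^ 3"
proof -
  have sq: "(b\<^sup>2) $ 0 = 0" "(b\<^sup>2) $ 1 = 0" "(b\<^sup>2) $ 2 = (b $ 1)\<^sup>2"
    using b0 by (simp_all add: power2_eq_square fps_mult_nth numeral_2_eq_2)
  have sq3: "(b\<^sup>2) $ 3 = 2 * b $ 1 * b $ 2"
    using b0 by (simp add: power2_eq_square fps_mult_nth numeral_3_eq_3 numeral_2_eq_2 mult_ac
        flip: mult_2)
  have cube_split: "b ^ 3 = b * b\<^sup>2"
    by (simp add: power2_eq_square power3_eq_cube mult.assoc)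
  then have cube: "(b ^ 3) $ 3 = (b $ 1) ^ 3"
    using b0 sq by (simp add: fps_mult_nth numeral_3_eq_3 power2_eq_square power3_eq_cube)
  have cube0: "(b ^ 3) $ 0 = 0" "(b ^ 3) $ 1 = 0" "(b ^ 3) $ 2 = 0"
    using b0 sq cube_split by (simp_all add: fps_mult_nth numeral_2_eq_2)
  show ?thesis
    using b0 sq sq3 cube cube0 by (simp add: fps_compose_nth numeral_3_eq_3 numeral_2_eq_2 mult_ac)
qed

lemma fps_inv_nth_0 [simp]: "fps_inv f $ 0 = 0"
  by (simp add: fps_inv_def)

lemma fps_inv_nth_1:
  fixes f :: "'a::field fps"
  assumes "f $ 0 = 0" and "f $ 1 \<noteq> 0"
  shows "fps_inv f $ 1 = inverse (f $ 1)"
proof -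
  have "fps_inv f $ 1 * f $ 1 = 1"
    using fps_inv[OF assms] fps_compose_nth_1[OF assms(1), of "fps_inv f"] by simp
  then show ?thesis
    using assms(2) by (simp add: field_simps)
qed

lemma fps_compose_inv_cancel:
  fixes a f :: "'a::field fps"
  assumes "f $ 0 = 0" and "f $ 1 \<noteq> 0"
  shows "a oo f oo fps_inv f = a" and "a oo fps_inv f oo f = a"
  using assms fps_inv[OF assms] fps_inv_right[OF assms]
  by (simp_all flip: fps_compose_assoc)

lemma fps_compose_nth_3_eq_square:
  fixes f g :: "'a::comm_semiring_1 fps"
  assumes f0: "f $ 0 = 0" and "f $ 1 = 1" and "g $ 1 = 1"
    and "f $ 3 = (f $ 2)\<^sup>2" and "g $ 3 = (g $ 2)\<^sup>2"
  shows "(g oo f) $ 1 = 1" and "(g oo f) $ 3 = ((g oo f) $ 2)\<^sup>2"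
  using assms fps_compose_nth_1[OF f0, of g] fps_compose_nth_2[OF f0, of g]
    fps_compose_nth_3[OF f0, of g]
  by (simp_all add: power2_sum add_ac mult_ac)

lemma fps_inv_nth_3_eq_square:
  fixes f :: "'a::field fps"
  assumes f0: "f $ 0 = 0" and f1: "f $ 1 = 1" and f3: "f $ 3 = (f $ 2)\<^sup>2"
  shows "fps_inv f $ 1 = 1" and "fps_inv f $ 3 = (fps_inv f $ 2)\<^sup>2"
proof -
  have inv_f: "fps_inv f oo f = fps_X"
    using f0 f1 by (simp add: fps_inv)
  show inv1: "fps_inv f $ 1 = 1"
    using fps_inv_nth_1[OF f0] f1 by simp
  have "fps_inv f $ 2 + f $ 2 = 0"
    using arg_cong[OF inv_f, of "\<lambda>h. h $ 2"] fps_compose_nth_2[OF f0, of "fps_inv f"] f1 inv1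
    by (simp add: add.commute)
  then have inv2: "fps_inv f $ 2 = - f $ 2"
    by (simp add: eq_neg_iff_add_eq_0)
  have "fps_inv f $ 3 + 2 * fps_inv f $ 2 * f $ 2 + f $ 3 = 0"
    using arg_cong[OF inv_f, of "\<lambda>h. h $ 3"] fps_compose_nth_3[OF f0, of "fps_inv f"] f1 inv1
    by (simp add: algebra_simps)
  then show "fps_inv f $ 3 = (fps_inv f $ 2)\<^sup>2"
    using inv2 f3 by (simp add: power2_eq_square)
qed

lemma A_seq_equation_iff:
  fixes f A :: "'a::field fps"
  assumes f0: "f $ 0 = 0" and f1: "f $ 1 \<noteq> 0"
  shows "f = fps_X * (A oo f) \<longleftrightarrow> A = fps_shift 1 f oo fps_inv f"
proof -
  have "f = fps_X * (A oo f) \<longleftrightarrow> fps_shift 1 f = A oo f"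
  proof
    assume "f = fps_X * (A oo f)"
    then show "fps_shift 1 f = A oo f"
      by (metis fps_shift_times_fps_X' mult.commute)
  next
    have "1 \<le> subdegree f"
      using f0 f1 by (intro subdegree_geI) auto
    then have "f = fps_X * fps_shift 1 f"
      by (metis fps_shift_times_fps_X mult.commute)
    then show "fps_shift 1 f = A oo f \<Longrightarrow> f = fps_X * (A oo f)"
      by simp
  qed
  also have "\<dots> \<longleftrightarrow> A = fps_shift 1 f oo fps_inv f"
    using fps_compose_inv_cancel[OF f0 f1] by metis
  finally show ?thesis .
qed

lemma A_seq_eq:
  fixes f :: "'a::field fps"
  assumes "f $ 0 = 0" and "f $ 1 \<noteq> 0"
  shows "A_seq f = fps_shift 1 f oo fps_inv f"
  unfolding A_seq_def using A_seq_equation_iff[OF assms] by simp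

lemma A_seq_equation:
  fixes f :: "'a::field fps"
  assumes "f $ 0 = 0" and "f $ 1 \<noteq> 0"
  shows "f = fps_X * (A_seq f oo f)"
  using A_seq_equation_iff[OF assms] A_seq_eq[OF assms] by simp

lemma A_seq_coeffs:
  fixes f :: "'a::field fps"
  assumes f0: "f $ 0 = 0" and f1: "f $ 1 \<noteq> 0"
  defines "A \<equiv> A_seq f"
  shows "f $ 1 = A $ 0" and "f $ 2 = A $ 1 * f $ 1"
    and "f $ 3 = A $ 1 * f $ 2 + A $ 2 * (f $ 1)\<^sup>2"
proof -
  have shift: "f $ Suc n = (A oo f) $ n" for n
    using arg_cong[OF A_seq_equation[OF f0 f1], of "\<lambda>h. h $ Suc n"] by (simp add: A_def)
  show "f $ 1 = A $ 0"
    using shift[of 0] by simp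
  show "f $ 2 = A $ 1 * f $ 1"
    using shift[of 1] fps_compose_nth_1[OF f0, of A] by (simp add: numeral_2_eq_2)
  show "f $ 3 = A $ 1 * f $ 2 + A $ 2 * (f $ 1)\<^sup>2"
    using shift[of 2] fps_compose_nth_2[OF f0, of A] by (simp add: numeral_3_eq_3)
qed

lemma R02_iff:
  fixes g f :: "'a::field fps"
  shows "(g, f) \<in> R02 \<longleftrightarrow> (g, f) \<in> riordan_set \<and> f $ 1 = 1 \<and> f $ 3 = (f $ 2)\<^sup>2"
proof (cases "(g, f) \<in> riordan_set")
  case True
  then have f0: "f $ 0 = 0" and f1: "f $ 1 \<noteq> 0"
    by (auto simp: riordan_set_def)
  have "f $ 1 = A_seq f $ 0" and "A_seq f $ 0 = 1 \<Longrightarrow> f $ 3 - (f $ 2)\<^sup>2 = A_seq f $ 2"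
    using A_seq_coeffs[OF f0 f1] by (simp_all add: power2_eq_square)
  then show ?thesis
    using True by (auto simp: R02_def)
qed (simp add: R02_def)

lemma riordan_mult_closed:
  assumes "p \<in> riordan_set" and "q \<in> riordan_set"
  shows "riordan_mult p q \<in> riordan_set"
  using assms fps_compose_nth_1[of "snd p" "snd q"]
  by (auto simp: riordan_set_def riordan_mult_def)

lemma riordan_mult_assoc:
  assumes "p \<in> riordan_set" and "q \<in> riordan_set"
  shows "riordan_mult (riordan_mult p q) r = riordan_mult p (riordan_mult q r)"
  using assms
  by (auto simp: riordan_set_def riordan_mult_def fps_compose_mult_distrib fps_compose_assoc
      mult.assoc)

lemma riordan_mult_one_left: "riordan_mult (1, fps_X) p = p"
  by (simp add: riordan_mult_def)

definition riordan_inv :: "'a::field fps \<times> 'a fps \<Rightarrow> 'a fps \<times> 'a fps" where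
  "riordan_inv p = (inverse (fst p oo fps_inv (snd p)), fps_inv (snd p))"

lemma riordan_inv_closed:
  assumes "p \<in> riordan_set"
  shows "riordan_inv p \<in> riordan_set"
  using assms fps_inv_nth_1[of "snd p"]
  by (auto simp: riordan_set_def riordan_inv_def)

lemma riordan_mult_inv_left:
  assumes "p \<in> riordan_set"
  shows "riordan_mult (riordan_inv p) p = (1, fps_X)"
  using assms fps_inv_right[of "snd p"]
  by (auto simp: riordan_set_def riordan_inv_def riordan_mult_def inverse_mult_eq_1)

lemma riordan_group_is_group: "group (riordan_group :: ('a::field fps \<times> 'a fps) monoid)"
  unfolding riordan_group_def
  by (rule groupI)
    (auto simp: riordan_mult_closed riordan_mult_assoc riordan_mult_one_left
      intro!: bexI[of _ "riordan_inv _"] riordan_inv_closed riordan_mult_inv_left,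
     simp add: riordan_set_def)

lemma riordan_group_inv:
  assumes "p \<in> riordan_set"
  shows "inv\<^bsub>riordan_group\<^esub> p = riordan_inv p"
  using assms
  by (intro group.inv_equality[OF riordan_group_is_group])
    (simp_all add: riordan_group_def riordan_inv_closed riordan_mult_inv_left)

lemma R02_subgroup: "subgroup (R02 :: ('a::field fps \<times> 'a fps) set) riordan_group"
proof (rule group.subgroupI[OF riordan_group_is_group])
  show "R02 \<subseteq> carrier riordan_group"
    by (auto simp: R02_def riordan_group_def)
  show "R02 \<noteq> {}"
    using R02_iff[of 1 fps_X] by (auto simp: riordan_set_def)
next
  fix p :: "'a fps \<times> 'a fps"
  assume "p \<in> R02"
  moreover obtain g f where "p = (g, f)"
    by fastforce
  ultimately show "inv\<^bsub>riordan_group\<^esub> p \<in> R02"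
    using fps_inv_nth_3_eq_square[of f] riordan_inv_closed[of p]
    by (auto simp: R02_iff riordan_group_inv riordan_inv_def riordan_set_def)
next
  fix p q :: "'a fps \<times> 'a fps"
  assume "p \<in> R02" and "q \<in> R02"
  moreover obtain g f g' f' where "p = (g, f)" and "q = (g', f')"
    by fastforce
  ultimately show "p \<otimes>\<^bsub>riordan_group\<^esub> q \<in> R02"
    using fps_compose_nth_3_eq_square[of f f'] riordan_mult_closed[of p q]
    by (auto simp: R02_iff riordan_group_def riordan_mult_def riordan_set_def)
qed

theorem theorem4p1:
  shows "subgroup (R02 :: (real fps \<times> real fps) set) riordan_group
       \<and> subgroup (R02 :: (complex fps \<times> complex fps) set) riordan_group"
  using R02_subgroup R02_subgroup by blast

end
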